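(* Let $k\in\mathbb{Z}$ and $z\in\mathbb{C}$ with $|z|\ge \left(\tfrac12+(2|k|+1)\pi\right)e^{-1/2}$ (in particular, this holds whenever $|z|\ge 4(|k|+1)$). Then $|W_k'(z)|\le \frac{1}{|z|}$.
   Context: $W_k$ denotes the $k$-th branch of the Lambert $W$ function (inverse of $w\mapsto we^w$) in the standard convention of Corless, Gonnet, Hare, Jeffrey and Knuth (1996). On a branch cut, values are defined by continuity from the upper half plane and $W_k'$ denotes the derivative of the fixed branch $W_k$ (directional derivative along the cut there). *)

theory Defs
  imports "HOL-Analysis.Analysis"
begin

text \<open>Branches of the Lambert W function, following Corless--Gonnet--Hare--Jeffrey--Knuth.
  The range of branch k is described via the quantity Im w + Arg w (Arg with values in
  (-pi, pi]): the boundaries of the Corless ranges are exactly the curves where this quantity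
  is an odd multiple of pi. Boundaries are attached so that each branch is continuous from
  the upper half plane on its cut (counter-clockwise continuity). The real segment
  (-inf,-1] belongs to branch -1 (W_{-1} is real on [-1/e,0)), w = -1 lies in both
  ranges of branches 0 and -1.\<close>

definition lambert_range :: "int \<Rightarrow> complex set" where
  "lambert_range k =
     (if k = 0 then
        {w. - pi < Im w + Arg w \<and> Im w + Arg w \<le> pi} - {w. Im w = 0 \<and> Re w < -1}
      else if k = -1 then
        {w. - 3 * pi < Im w + Arg w \<and> Im w + Arg w \<le> - pi} \<union> {w. Im w = 0 \<and> Re w \<le> -1}
      else
        {w. (2 * of_int k - 1) * pi < Im w + Arg w \<and> Im w + Arg w \<le> (2 * of_int k + 1) * pi})"

definition Lambert_W :: "int \<Rightarrow> complex \<Rightarrow> complex" where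
  "Lambert_W k z = (THE w. w * exp w = z \<and> w \<in> lambert_range k)"

definition lambert_cut :: "int \<Rightarrow> complex set" where
  "lambert_cut k =
     (if k = 0 then {z. Im z = 0 \<and> Re z \<le> - exp (-1)} else {z. Im z = 0 \<and> Re z \<le> 0})"

text \<open>D is the derivative W_k'(z) of the fixed branch W_k at z: the complex derivative off the
  cut, the directional derivative along the cut on the cut.\<close>

definition Lambert_W_has_deriv :: "int \<Rightarrow> complex \<Rightarrow> complex \<Rightarrow> bool" where
  "Lambert_W_has_deriv k z D \<longleftrightarrow>
     (Lambert_W k has_field_derivative D)
        (at z within (if z \<in> lambert_cut k then lambert_cut k else UNIV))"

end

theory Submission
  imports Defs "HOL-Complex_Analysis.Complex_Analysis"
begin

(* On the region D where Re w > 0, or Re w > -1/2 and |Im w| > 1/2, the function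
   h w = Ln w + w is a logarithm of w e^w with Im (h w) = Im w + Arg w, the quantity that
   singles out the branch ranges. h is injective on D: its derivative 1/w + 1 has positive
   real part on each of three convex pieces of D, and Im h tells the pieces apart.
   If |z| exceeds the bound, every preimage of a point near z in the range of W_k lies in D.
   Hence near z (along the cut, if z is on it) W_k is g (log z + 2 pi i k) for the inverse g of
   h and a suitable branch of log, so W_k'(z) = w / ((1 + w) z) with w = W_k(z), and
   |w / (1 + w)| <= 1 because Re w > -1/2. *)

lemma inj_on_convex_if_Re_deriv_pos:
  fixes f f' :: "complex \<Rightarrow> complex"
  assumes C: "convex C"
    and deriv: "\<And>w. w \<in> C \<Longrightarrow> (f has_field_derivative f' w) (at w)"
    and pos: "\<And>w. w \<in> C \<Longrightarrow> 0 < Re (f' w)"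
  shows "inj_on f C"
proof (rule inj_onI, rule ccontr)
  fix a b assume ab: "a \<in> C" "b \<in> C" "f a = f b" and "a \<noteq> b"
  define d where "d = b - a"
  have "d \<noteq> 0" using \<open>a \<noteq> b\<close> by (simp add: d_def)
  have segment: "a + of_real t * d \<in> C" if "0 \<le> t" "t \<le> 1" for t
  proof -
    have "(1 - t) *\<^sub>R a + t *\<^sub>R b \<in> C"
      using convexD[OF C ab(1,2), of "1 - t" t] that by simp
    then show ?thesis by (simp add: d_def scaleR_conv_of_real algebra_simps)
  qed
  define q where "q t = Re (f (a + of_real t * d) / d)" for t
  have q_deriv: "(q has_real_derivative Re (f' (a + of_real t * d))) (at t)"
    if "0 \<le> t" "t \<le> 1" for t
  proof -
    have "((\<lambda>s. a + s * d) has_field_derivative d) (at (of_real t))"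
      by (auto intro!: derivative_eq_intros)
    from DERIV_cdivide[OF DERIV_chain2[OF deriv[OF segment[OF that]] this], of d]
    have "((\<lambda>s. f (a + s * d) / d) has_field_derivative f' (a + of_real t * d)) (at (of_real t))"
      using \<open>d \<noteq> 0\<close> by simp
    from has_field_derivative_Re[OF has_vector_derivative_real_field[OF this, of UNIV]]
    show ?thesis unfolding q_def by simp
  qed
  obtain t where t: "0 < t" "t < 1" "q 1 - q 0 = Re (f' (a + of_real t * d))"
    using MVT2[of 0 1 q "\<lambda>t. Re (f' (a + of_real t * d))"] q_deriv by auto
  moreover have "q 1 = q 0" using ab(3) by (simp add: q_def d_def)
  ultimately show False using pos[OF segment[of t]] by simp
qed

definition branch_strip :: "int \<Rightarrow> real set" where
  "branch_strip k = {(2 * of_int k - 1) * pi <.. (2 * of_int k + 1) * pi}"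

lemma Arg_plus_in_branch_strip: "Arg z + 2 * of_int k * pi \<in> branch_strip k"
  using mpi_less_Arg[of z] Arg_le_pi[of z] by (simp add: branch_strip_def algebra_simps)

lemma abs_le_if_in_branch_strip:
  assumes "x \<in> branch_strip k"
  shows "\<bar>x\<bar> \<le> (2 * \<bar>real_of_int k\<bar> + 1) * pi"
proof -
  have "2 * (pi * k) - pi < x" "x \<le> 2 * (pi * k) + pi"
    using assms by (auto simp: branch_strip_def algebra_simps)
  then have "\<bar>x\<bar> \<le> 2 * \<bar>pi * k\<bar> + pi" by linarith
  then show ?thesis by (simp add: abs_mult algebra_simps)
qed

lemma exp_inj_on_branch_strip:
  assumes "exp a = exp b" "Im a \<in> branch_strip k" "Im b \<in> branch_strip k"
  shows "a = b"
proof -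
  obtain n :: int where n: "a = b + of_int (2 * n) * pi * \<i>"
    using assms(1) exp_eq by blast
  have "\<bar>Im a - Im b\<bar> < 2 * pi"
    using assms(2,3) by (auto simp: branch_strip_def algebra_simps)
  moreover have "Im a - Im b = of_int n * (2 * pi)" using n by simp
  ultimately have "\<bar>real_of_int n\<bar> < 1" by (simp add: abs_mult)
  then have "n = 0" by linarith
  with n show ?thesis by simp
qed

lemma exp_half_le: "exp (1/2 :: real) \<le> 9/5"
proof (rule power2_le_imp_le)
  have "(exp (1/2) :: real)\<^sup>2 = exp 1" by (simp add: power2_eq_square flip: exp_add)
  then show "(exp (1/2) :: real)\<^sup>2 \<le> (9/5)\<^sup>2" using exp_le by (simp add: power2_eq_square)
qed simp

lemma exp_minus_half_ge: "5/9 \<le> exp (- 1/2 :: real)"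
  using exp_half_le by (simp add: exp_minus field_simps)

lemma exp_minus_one_le: "exp (-1 :: real) \<le> 1/2"
  using exp_ge_add_one_self[of "1::real"] by (simp add: exp_minus field_simps)

lemma mult_exp_minus_le: "t * exp (- t) \<le> exp (-1 :: real)"
proof -
  have "t * exp (- t) \<le> exp (t - 1) * exp (- t)"
    using exp_ge_add_one_self[of "t - 1"] by (intro mult_right_mono) auto
  then show ?thesis by (simp flip: exp_add)
qed

lemma mult_cos_le_sin:
  assumes "0 \<le> a" "a \<le> pi"
  shows "a * cos a \<le> sin a"
proof -
  have "(\<lambda>t. sin t - t * cos t) 0 \<le> (\<lambda>t. sin t - t * cos t) a"
  proof (rule DERIV_nonneg_imp_nondecreasing[OF assms(1)])
    fix x assume "0 \<le> x" "x \<le> a"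
    then have "0 \<le> x * sin x" using assms sin_ge_zero[of x] by simp
    moreover have "((\<lambda>t. sin t - t * cos t) has_real_derivative x * sin x) (at x)"
      by (auto intro!: derivative_eq_intros)
    ultimately show "\<exists>y. ((\<lambda>t. sin t - t * cos t) has_real_derivative y) (at x) \<and> 0 \<le> y"
      by blast
  qed
  then show ?thesis by simp
qed

section \<open>An injective logarithm of w e^w\<close>

definition lambert_arg :: "complex \<Rightarrow> real" where
  "lambert_arg w = Im w + Arg w"

definition lambert_log :: "complex \<Rightarrow> complex" where
  "lambert_log w = Ln w + w"

definition lambert_log_domain :: "complex set" where
  "lambert_log_domain = {w. 0 < Re w} \<union> {w. - 1/2 < Re w \<and> 1/2 < \<bar>Im w\<bar>}"

lemma exp_lambert_log: "w \<noteq> 0 \<Longrightarrow> exp (lambert_log w) = w * exp w"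
  by (simp add: lambert_log_def exp_add)

lemma Im_lambert_log: "w \<noteq> 0 \<Longrightarrow> Im (lambert_log w) = lambert_arg w"
  by (simp add: lambert_log_def lambert_arg_def Ln_Arg)

lemma lambert_log_domain_nonpos_Reals: "w \<in> lambert_log_domain \<Longrightarrow> w \<notin> \<real>\<^sub>\<le>\<^sub>0"
  by (auto simp: lambert_log_domain_def complex_nonpos_Reals_iff)

lemma lambert_log_domain_nonzero: "w \<in> lambert_log_domain \<Longrightarrow> w \<noteq> 0"
  by (auto simp: lambert_log_domain_def)

lemma open_lambert_log_domain: "open lambert_log_domain"
proof -
  have eq: "lambert_log_domain =
      {w. 0 < Re w} \<union> ({w. - 1/2 < Re w} \<inter> ({w. 1/2 < Im w} \<union> {w. Im w < - 1/2}))"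
    by (auto simp: lambert_log_domain_def)
  show ?thesis unfolding eq
    by (intro open_Un open_Int open_halfspace_Re_gt open_halfspace_Im_gt open_halfspace_Im_lt)
qed

lemma has_field_derivative_lambert_log:
  "w \<notin> \<real>\<^sub>\<le>\<^sub>0 \<Longrightarrow> (lambert_log has_field_derivative inverse w + 1) (at w)"
  unfolding lambert_log_def[abs_def] by (auto intro!: derivative_eq_intros)

lemma Re_inverse_plus_one_pos:
  assumes "w \<in> lambert_log_domain"
  shows "0 < Re (inverse w + 1)"
proof -
  have "0 < (Re w)\<^sup>2 + (Im w)\<^sup>2"
    using assms by (auto simp: lambert_log_domain_def sum_power2_gt_zero_iff)
  moreover have "0 < Re w + ((Re w)\<^sup>2 + (Im w)\<^sup>2)"
  proof (cases "0 < Re w")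
    case False
    with assms have "1/2 < \<bar>Im w\<bar>" "- 1/2 < Re w" by (auto simp: lambert_log_domain_def)
    then have "1/2 * (1/2) < \<bar>Im w\<bar> * \<bar>Im w\<bar>" by (intro mult_strict_mono) auto
    then have "1/4 < (Im w)\<^sup>2" by (simp add: power2_eq_square)
    \<comment> \<open>Re w + (Re w)^2 + 1/4 = (Re w + 1/2)^2\<close>
    moreover have "0 \<le> (Re w + 1/2)\<^sup>2" by simp
    ultimately show ?thesis by (simp add: power2_eq_square algebra_simps)
  qed (simp add: add_pos_nonneg)
  ultimately have "- 1 < Re w / ((Re w)\<^sup>2 + (Im w)\<^sup>2)" by (simp add: field_simps)
  then show ?thesis by simp
qed

lemma lambert_arg_pos: "0 < Im w \<Longrightarrow> 0 < lambert_arg w"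
  using Arg_less_0[of w] by (simp add: lambert_arg_def)

lemma lambert_arg_neg: "Im w < 0 \<Longrightarrow> lambert_arg w < 0"
  using Arg_neg_iff[of w] by (simp add: lambert_arg_def)

lemma abs_Im_plus_le_abs_lambert_arg:
  assumes "Re w \<le> 0" "Im w \<noteq> 0"
  shows "\<bar>Im w\<bar> + pi/2 \<le> \<bar>lambert_arg w\<bar>"
proof (cases "0 < Im w")
  case True
  then have "pi/2 \<le> Arg w" using assms(1) Arg_Re_pos[of w] Arg_less_0[of w] by auto
  with True show ?thesis by (simp add: lambert_arg_def)
next
  case False
  then have "Arg w \<le> - pi/2" using assms Arg_Re_pos[of w] Arg_neg_iff[of w] by auto
  with False assms(2) show ?thesis by (simp add: lambert_arg_def)
qed

lemma abs_lambert_arg_lt: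
  assumes "0 < Re w" "\<bar>Im w\<bar> \<le> 1/2"
  shows "\<bar>lambert_arg w\<bar> < 1/2 + pi/2"
  using assms Arg_Re_pos[of w] by (simp add: lambert_arg_def)

lemma inj_on_lambert_log: "inj_on lambert_log lambert_log_domain"
proof (rule inj_onI)
  fix a b
  assume a: "a \<in> lambert_log_domain" and b: "b \<in> lambert_log_domain"
    and eq: "lambert_log a = lambert_log b"
  have "a \<noteq> 0" "b \<noteq> 0" using a b by (simp_all add: lambert_log_domain_nonzero)
  then have arg_eq: "lambert_arg a = lambert_arg b" using eq Im_lambert_log by metis
  have on_piece: "a = b" if "convex C" "C \<subseteq> lambert_log_domain" "a \<in> C" "b \<in> C" for C
  proof (rule inj_onD[OF inj_on_convex_if_Re_deriv_pos[OF \<open>convex C\<close>] eq \<open>a \<in> C\<close> \<open>b \<in> C\<close>])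
    show "(lambert_log has_field_derivative inverse w + 1) (at w)" if "w \<in> C" for w
      using that \<open>C \<subseteq> _\<close> has_field_derivative_lambert_log lambert_log_domain_nonpos_Reals by blast
    show "0 < Re (inverse w + 1)" if "w \<in> C" for w
      using that \<open>C \<subseteq> _\<close> Re_inverse_plus_one_pos by blast
  qed
  \<comment> \<open>points of different convex pieces have different values of Im (lambert_log w)\<close>
  have not_opposite: "\<not> (1/2 < Im x \<and> Im y < - 1/2)" if "lambert_arg x = lambert_arg y" for x y
    using that lambert_arg_pos[of x] lambert_arg_neg[of y] by auto
  have not_mixed: "\<not> (Re x \<le> 0 \<and> 1/2 < \<bar>Im x\<bar> \<and> 0 < Re y \<and> \<bar>Im y\<bar> \<le> 1/2)"
    if "lambert_arg x = lambert_arg y" for x y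
  proof
    assume mixed: "Re x \<le> 0 \<and> 1/2 < \<bar>Im x\<bar> \<and> 0 < Re y \<and> \<bar>Im y\<bar> \<le> 1/2"
    then have "\<bar>Im x\<bar> + pi/2 \<le> \<bar>lambert_arg x\<bar>" by (intro abs_Im_plus_le_abs_lambert_arg) auto
    moreover have "\<bar>lambert_arg y\<bar> < 1/2 + pi/2" using mixed by (intro abs_lambert_arg_lt) auto
    ultimately show False using mixed that by linarith
  qed
  consider "0 < Re a" "0 < Re b"
    | "- 1/2 < Re a" "- 1/2 < Re b" "1/2 < Im a" "1/2 < Im b"
    | "- 1/2 < Re a" "- 1/2 < Re b" "Im a < - 1/2" "Im b < - 1/2"
    using a b not_opposite[OF arg_eq] not_opposite[OF arg_eq[symmetric]]
      not_mixed[OF arg_eq] not_mixed[OF arg_eq[symmetric]]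
    unfolding lambert_log_domain_def by (auto simp: abs_less_iff abs_le_iff)
  then show "a = b"
  proof cases
    case 1
    then show ?thesis
      by (intro on_piece[OF convex_halfspace_Re_gt[of 0]]) (auto simp: lambert_log_domain_def)
  next
    case 2
    then show ?thesis
      by (intro on_piece[OF convex_Int[OF convex_halfspace_Re_gt convex_halfspace_Im_gt[of "1/2"]]])
        (auto simp: lambert_log_domain_def)
  next
    case 3
    then show ?thesis
      by (intro on_piece[OF convex_Int[OF convex_halfspace_Re_gt convex_halfspace_Im_lt[of "- 1/2"]]])
        (auto simp: lambert_log_domain_def)
  qed
qed

lemma lambert_log_holomorphic_on: "lambert_log holomorphic_on lambert_log_domain"
  using has_field_derivative_lambert_log lambert_log_domain_nonpos_Reals
  by (subst holomorphic_on_open[OF open_lambert_log_domain]) blast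

lemma open_lambert_log_image: "open (lambert_log ` lambert_log_domain)"
  by (rule open_mapping_thm3[OF lambert_log_holomorphic_on open_lambert_log_domain inj_on_lambert_log])

lemma lambert_log_inverse:
  obtains g where "\<And>w. w \<in> lambert_log_domain \<Longrightarrow> g (lambert_log w) = w"
    and "\<And>w. w \<in> lambert_log_domain \<Longrightarrow> (g has_field_derivative w / (1 + w)) (at (lambert_log w))"
proof -
  obtain g where g: "g holomorphic_on lambert_log ` lambert_log_domain"
    and g_deriv: "\<And>w. w \<in> lambert_log_domain \<Longrightarrow> deriv lambert_log w * deriv g (lambert_log w) = 1"
    and g_inv: "\<And>w. w \<in> lambert_log_domain \<Longrightarrow> g (lambert_log w) = w"
    using holomorphic_has_inverse[OF lambert_log_holomorphic_on open_lambert_log_domain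
        inj_on_lambert_log] by blast
  have "(g has_field_derivative w / (1 + w)) (at (lambert_log w))"
    if w: "w \<in> lambert_log_domain" for w
  proof -
    have "w \<noteq> 0" "1 + w \<noteq> 0" using w by (auto simp: lambert_log_domain_def complex_eq_iff)
    have "deriv lambert_log w = inverse w + 1"
      using w by (intro DERIV_imp_deriv has_field_derivative_lambert_log lambert_log_domain_nonpos_Reals)
    with g_deriv[OF w] have "deriv g (lambert_log w) = inverse (inverse w + 1)"
      by (simp add: inverse_unique)
    also have "\<dots> = w / (1 + w)"
      using \<open>w \<noteq> 0\<close> \<open>1 + w \<noteq> 0\<close> by (simp add: field_simps)
    finally have "deriv g (lambert_log w) = w / (1 + w)" .
    with holomorphic_derivI[OF g open_lambert_log_image, of "lambert_log w" UNIV] w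
    show ?thesis by auto
  qed
  with g_inv that show ?thesis by blast
qed

lemma norm_divide_one_plus_le:
  fixes w :: complex
  assumes "- 1/2 \<le> Re w"
  shows "norm (w / (1 + w)) \<le> 1"
proof -
  have "norm w \<le> norm (1 + w)"
    unfolding cmod_def using assms
    by (intro real_sqrt_le_mono) (simp add: power2_eq_square algebra_simps)
  then show ?thesis by (simp add: norm_divide divide_le_eq_1)
qed

section \<open>Branch values of large modulus\<close>

definition lambert_bound :: "int \<Rightarrow> real" where
  "lambert_bound k = (1/2 + (2 * \<bar>real_of_int k\<bar> + 1) * pi) * exp (- 1/2)"

lemma lambert_bound_ge_two: "2 \<le> lambert_bound k"
proof -
  have "(1/2 + pi) * (5/9) \<le> (1/2 + (2 * \<bar>real_of_int k\<bar> + 1) * pi) * exp (- 1/2)"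
    by (intro mult_mono exp_minus_half_ge) (auto simp: algebra_simps)
  moreover have "2 \<le> (1/2 + pi) * (5/9)" using pi_approx by simp
  ultimately show ?thesis by (simp add: lambert_bound_def)
qed

lemma norm_mult_exp_less_if_notin_lambert_log_domain:
  assumes "w \<notin> lambert_log_domain" "\<bar>lambert_arg w\<bar> \<le> (2 * \<bar>real_of_int k\<bar> + 1) * pi"
  shows "norm (w * exp w) < lambert_bound k - 1/4"
proof -
  have "Re w \<le> 0" and "Re w \<le> - 1/2 \<or> \<bar>Im w\<bar> \<le> 1/2"
    using assms(1) by (auto simp: lambert_log_domain_def)
  have "norm (w * exp w) \<le> (\<bar>Re w\<bar> + \<bar>Im w\<bar>) * exp (Re w)"
    by (simp add: norm_mult mult_right_mono cmod_le)
  also have "\<dots> = (- Re w) * exp (- (- Re w)) + \<bar>Im w\<bar> * exp (Re w)"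
    using \<open>Re w \<le> 0\<close> by (simp add: algebra_simps)
  finally have norm_le: "norm (w * exp w) \<le> (- Re w) * exp (- (- Re w)) + \<bar>Im w\<bar> * exp (Re w)" .
  show ?thesis
  proof (cases "Re w \<le> - 1/2")
    case True
    have "\<bar>Im w\<bar> \<le> (2 * \<bar>real_of_int k\<bar> + 1) * pi - pi/2"
      using abs_Im_plus_le_abs_lambert_arg[OF \<open>Re w \<le> 0\<close>] assms(2)
      by (cases "Im w = 0") (auto simp: algebra_simps)
    with True have "\<bar>Im w\<bar> * exp (Re w) \<le> ((2 * \<bar>real_of_int k\<bar> + 1) * pi - pi/2) * exp (- 1/2)"
      by (intro mult_mono) auto
    then have "norm (w * exp w) \<le> exp (-1) + ((2 * \<bar>real_of_int k\<bar> + 1) * pi - pi/2) * exp (- 1/2)"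
      using norm_le mult_exp_minus_le[of "- Re w"] by linarith
    moreover have "exp (-1) < (1/2 + pi/2) * exp (- 1/2) - 1/4"
    proof -
      have "(1/2 + pi/2) * (5/9) \<le> (1/2 + pi/2) * exp (- 1/2)"
        using exp_minus_half_ge pi_gt3 by (intro mult_left_mono) auto
      moreover have "3/4 < (1/2 + pi/2) * (5/9)" using pi_gt3 by simp
      ultimately show ?thesis using exp_minus_one_le by linarith
    qed
    ultimately show ?thesis by (simp add: lambert_bound_def algebra_simps)
  next
    case False
    with \<open>Re w \<le> - 1/2 \<or> \<bar>Im w\<bar> \<le> 1/2\<close> have "norm w \<le> 1"
      using cmod_le[of w] \<open>Re w \<le> 0\<close> by linarith
    moreover have "exp (Re w) \<le> 1" using \<open>Re w \<le> 0\<close> by simp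
    ultimately have "norm (w * exp w) \<le> 1" by (simp add: norm_mult mult_le_one)
    with lambert_bound_ge_two[of k] show ?thesis by linarith
  qed
qed

lemma lambert_arg_in_branch_strip_if_in_lambert_range:
  assumes "w \<in> lambert_range k" "\<not> (Im w = 0 \<and> Re w \<le> -1)"
  shows "lambert_arg w \<in> branch_strip k"
proof -
  consider "k = 0" | "k = -1" | "k \<noteq> 0" "k \<noteq> -1" by blast
  then show ?thesis
    by cases (use assms in \<open>simp_all add: lambert_range_def lambert_arg_def branch_strip_def\<close>)
qed

lemma in_lambert_range_if_in_branch_strip:
  assumes "w \<in> lambert_log_domain" "lambert_arg w \<in> branch_strip k"
  shows "w \<in> lambert_range k"
proof -
  have "\<not> (Im w = 0 \<and> Re w < -1)" using assms(1) by (auto simp: lambert_log_domain_def)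
  consider "k = 0" | "k = -1" | "k \<noteq> 0" "k \<noteq> -1" by blast
  then show ?thesis
    by cases (use assms \<open>\<not> (Im w = 0 \<and> Re w < -1)\<close> in
        \<open>simp_all add: lambert_range_def lambert_arg_def branch_strip_def\<close>)
qed

lemma in_lambert_log_domain_if_large:
  assumes "w \<in> lambert_range k" "lambert_bound k - 1/4 \<le> norm (w * exp w)"
  shows "w \<in> lambert_log_domain \<and> lambert_arg w \<in> branch_strip k"
proof -
  have "\<not> (Im w = 0 \<and> Re w \<le> -1)"
  proof
    assume "Im w = 0 \<and> Re w \<le> -1"
    then have "norm (w * exp w) = (- Re w) * exp (- (- Re w))"
      by (simp add: norm_mult cmod_eq_Re)
    also have "\<dots> \<le> exp (-1)" by (rule mult_exp_minus_le)
    finally show False using assms(2) lambert_bound_ge_two[of k] exp_minus_one_le by linarith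
  qed
  with assms(1) have "lambert_arg w \<in> branch_strip k"
    by (rule lambert_arg_in_branch_strip_if_in_lambert_range)
  moreover from this have "w \<in> lambert_log_domain"
    using norm_mult_exp_less_if_notin_lambert_log_domain[OF _ abs_le_if_in_branch_strip] assms(2)
    by (meson leD)
  ultimately show ?thesis by blast
qed

lemma Lambert_W_eqI:
  assumes v: "v \<in> lambert_log_domain" "lambert_arg v \<in> branch_strip k"
    and large: "lambert_bound k - 1/4 \<le> norm (v * exp v)"
  shows "Lambert_W k (v * exp v) = v"
  unfolding Lambert_W_def
proof (rule the_equality)
  show "v * exp v = v * exp v \<and> v \<in> lambert_range k"
    using in_lambert_range_if_in_branch_strip[OF v] by blast
  fix w assume w: "w * exp w = v * exp v \<and> w \<in> lambert_range k"
  then have "w \<in> lambert_log_domain" "lambert_arg w \<in> branch_strip k"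
    using in_lambert_log_domain_if_large large by auto
  have "exp (lambert_log w) = exp (lambert_log v)"
    using w v(1) \<open>w \<in> lambert_log_domain\<close> by (simp add: exp_lambert_log lambert_log_domain_nonzero)
  then have "lambert_log w = lambert_log v"
    by (rule exp_inj_on_branch_strip)
      (use v \<open>w \<in> lambert_log_domain\<close> \<open>lambert_arg w \<in> branch_strip k\<close> in
        \<open>simp_all add: Im_lambert_log lambert_log_domain_nonzero\<close>)
  then show "w = v"
    using inj_onD[OF inj_on_lambert_log] \<open>w \<in> lambert_log_domain\<close> v(1) by blast
qed

section \<open>Preimages with prescribed lambert_arg\<close>

(* The point rcis (level_radius \<theta> \<phi>) \<phi> runs along the curve lambert_arg w = \<theta>. *)
definition level_radius :: "real \<Rightarrow> real \<Rightarrow> real" where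
  "level_radius \<theta> \<phi> = (\<theta> - \<phi>) / sin \<phi>"

definition level_modulus :: "real \<Rightarrow> real \<Rightarrow> real" where
  "level_modulus \<theta> \<phi> = level_radius \<theta> \<phi> * exp (level_radius \<theta> \<phi> * cos \<phi>)"

lemma level_point:
  assumes "0 < \<phi>" "\<phi> < \<theta>" "\<phi> < pi"
  defines "w \<equiv> rcis (level_radius \<theta> \<phi>) \<phi>"
  shows "0 < Im w" "lambert_arg w = \<theta>" "w * exp w = of_real (level_modulus \<theta> \<phi>) * cis \<theta>"
proof -
  have "0 < sin \<phi>" using assms sin_gt_zero by auto
  then have r: "0 < level_radius \<theta> \<phi>" using assms by (simp add: level_radius_def)
  have Im_w: "Im w = \<theta> - \<phi>" using \<open>0 < sin \<phi>\<close> by (simp add: w_def level_radius_def)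
  have Re_w: "Re w = level_radius \<theta> \<phi> * cos \<phi>" by (simp add: w_def)
  show "0 < Im w" using Im_w assms by simp
  have "Arg w = \<phi>" unfolding w_def using assms r by (intro Arg_rcis) auto
  with Im_w show "lambert_arg w = \<theta>" by (simp add: lambert_arg_def)
  have "w * exp w = rcis (level_radius \<theta> \<phi>) \<phi> * (exp (Re w) * cis (Im w))"
    by (simp add: w_def exp_eq_polar)
  also have "\<dots> = of_real (level_radius \<theta> \<phi> * exp (Re w)) * cis (\<phi> + Im w)"
    by (simp add: rcis_def cis_mult)
  also have "\<dots> = of_real (level_modulus \<theta> \<phi>) * cis \<theta>"
    by (simp add: Im_w Re_w level_modulus_def)
  finally show "w * exp w = of_real (level_modulus \<theta> \<phi>) * cis \<theta>" .
qed

lemma continuous_on_level_modulus: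
  assumes "0 < a" "b < pi"
  shows "continuous_on {a..b} (level_modulus \<theta>)"
proof -
  have "sin x \<noteq> 0" if "x \<in> {a..b}" for x using that assms sin_gt_zero[of x] by auto
  then show ?thesis
    unfolding level_modulus_def[abs_def] level_radius_def by (intro continuous_intros) auto
qed

lemma level_modulus_two_thirds_le:
  assumes "0 < \<theta>" "\<theta> \<le> pi/2"
  shows "level_modulus \<theta> (2/3 * \<theta>) \<le> 2"
proof -
  define a where "a = 2/3 * \<theta>"
  have a: "0 < a" "a \<le> pi/3" using assms by (auto simp: a_def)
  have "0 < sin a" using a sin_gt_zero[of a] pi_gt3 by auto
  have "1/2 \<le> cos a" using cos_monotone_0_pi_le[of a "pi/3"] a cos_60 by auto
  have cos_le: "a * cos a \<le> sin a" using a by (intro mult_cos_le_sin) auto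
  have r: "level_radius \<theta> a = (a/2) / sin a" by (simp add: level_radius_def a_def)
  have "a/2 \<le> a * cos a" using \<open>1/2 \<le> cos a\<close> a by (simp add: field_simps)
  with cos_le \<open>0 < sin a\<close> have "level_radius \<theta> a \<le> 1" by (simp add: r)
  moreover have "level_radius \<theta> a * cos a \<le> 1/2" using cos_le \<open>0 < sin a\<close> by (simp add: r field_simps)
  moreover have "0 \<le> level_radius \<theta> a" using \<open>0 < sin a\<close> a by (simp add: r)
  ultimately have "level_modulus \<theta> a \<le> 1 * exp (1/2)"
    unfolding level_modulus_def by (intro mult_mono) auto
  also have "\<dots> \<le> 2" using exp_half_le by simp
  finally show ?thesis by (simp add: a_def)
qed

lemma level_modulus_two_pi_thirds_le: "level_modulus \<theta> (2 * pi / 3) \<le> 2"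
proof -
  have "cos (2 * pi / 3) = - cos (pi / 3)"
    using cos_pi_minus[of "pi/3"] by (simp add: field_simps)
  then have "cos (2 * pi / 3) = - 1/2" by (simp add: cos_60)
  then have "level_modulus \<theta> (2 * pi / 3) = 2 * (level_radius \<theta> (2 * pi / 3) / 2 * exp (- (level_radius \<theta> (2 * pi / 3) / 2)))"
    by (simp add: level_modulus_def)
  also have "\<dots> \<le> 2 * exp (-1)" by (intro mult_left_mono mult_exp_minus_le) auto
  also have "\<dots> \<le> 2" using exp_minus_one_le by simp
  finally show ?thesis .
qed

lemma level_modulus_le_two:
  assumes "0 < \<theta>"
  obtains \<phi> where "0 < \<phi>" "\<phi> < \<theta>" "\<phi> < pi" "level_modulus \<theta> \<phi> \<le> 2"
proof -
  consider "\<theta> \<le> pi/2" | "pi/2 < \<theta>" "\<theta> \<le> pi" | "pi < \<theta>" by linarith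
  then show ?thesis
  proof cases
    case 1
    then show ?thesis
      using that[of "2/3 * \<theta>"] level_modulus_two_thirds_le assms pi_gt3 by auto
  next
    case 2
    have "level_modulus \<theta> (pi/2) = \<theta> - pi/2" by (simp add: level_modulus_def level_radius_def)
    with 2 show ?thesis using that[of "pi/2"] pi_approx by auto
  next
    case 3
    then show ?thesis
      using that[of "2 * pi / 3"] level_modulus_two_pi_thirds_le pi_gt3 by auto
  qed
qed

(* For small \<phi> the radius (\<theta> - \<phi>) / sin \<phi> grows like \<theta> / \<phi>. *)
lemma level_modulus_ge:
  assumes "0 < \<theta>" "1 \<le> \<rho>"
  obtains \<phi> where "0 < \<phi>" "\<phi> < \<theta>" "\<phi> < pi" "\<rho> \<le> level_modulus \<theta> \<phi>"
proof -
  define a where "a = min (pi/3) (\<theta> / (4 * \<rho>))"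
  have a: "0 < a" "a \<le> pi/3" "a \<le> \<theta> / (4 * \<rho>)" using assms by (auto simp: a_def)
  have "\<theta> / (4 * \<rho>) \<le> \<theta> / 4" using assms by (intro divide_left_mono) auto
  with a have "a \<le> \<theta>/4" by linarith
  have "0 < sin a" using a sin_gt_zero[of a] pi_gt3 by auto
  have "sin a \<le> a" using a sin_x_le_x by auto
  have "1/2 \<le> cos a" using cos_monotone_0_pi_le[of a "pi/3"] a cos_60 by auto
  have "\<rho> \<le> (\<theta>/2) * (1/2) / a" using a assms by (simp add: field_simps)
  also have "\<dots> \<le> (\<theta> - a) * cos a / a"
    by (intro divide_right_mono mult_mono) (use \<open>a \<le> \<theta>/4\<close> \<open>1/2 \<le> cos a\<close> a assms in auto)
  also have "\<dots> \<le> (\<theta> - a) * cos a / sin a"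
    by (intro divide_left_mono \<open>sin a \<le> a\<close>)
      (use \<open>a \<le> \<theta>/4\<close> \<open>1/2 \<le> cos a\<close> \<open>0 < sin a\<close> a assms in auto)
  also have "\<dots> = level_radius \<theta> a * cos a" by (simp add: level_radius_def)
  finally have \<rho>_le: "\<rho> \<le> level_radius \<theta> a * cos a" .
  have "0 < level_radius \<theta> a" using \<open>0 < sin a\<close> \<open>a \<le> \<theta>/4\<close> assms by (simp add: level_radius_def)
  then have "level_radius \<theta> a * cos a \<le> level_radius \<theta> a" by (simp add: mult_left_le)
  also have "\<dots> \<le> level_modulus \<theta> a"
    using \<open>0 < level_radius \<theta> a\<close> \<rho>_le assms by (simp add: level_modulus_def mult_le_cancel_left1)
  finally show ?thesis using that[of a] \<rho>_le a \<open>a \<le> \<theta>/4\<close> assms pi_gt3 by auto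
qed

lemma exists_lambert_arg_preimage_upper:
  assumes "0 < \<theta>" "2 \<le> \<rho>"
  shows "\<exists>w. 0 < Im w \<and> lambert_arg w = \<theta> \<and> w * exp w = of_real \<rho> * cis \<theta>"
proof -
  obtain p where p: "0 < p" "p < \<theta>" "p < pi" "level_modulus \<theta> p \<le> 2"
    using level_modulus_le_two assms by blast
  obtain q where q: "0 < q" "q < \<theta>" "q < pi" "\<rho> \<le> level_modulus \<theta> q"
    using level_modulus_ge[of \<theta> \<rho>] assms by auto
  have "\<exists>\<phi>. min p q \<le> \<phi> \<and> \<phi> \<le> max p q \<and> level_modulus \<theta> \<phi> = \<rho>"
  proof (cases "p \<le> q")
    case True
    then show ?thesis
      using IVT'[of "level_modulus \<theta>" p \<rho> q] p q assms continuous_on_level_modulus[of p q \<theta>] by auto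
  next
    case False
    then show ?thesis
      using IVT2'[of "level_modulus \<theta>" p \<rho> q] p q assms continuous_on_level_modulus[of q p \<theta>] by auto
  qed
  then obtain \<phi> where "0 < \<phi>" "\<phi> < \<theta>" "\<phi> < pi" "level_modulus \<theta> \<phi> = \<rho>"
    using p q by (metis max_less_iff_conj min_less_iff_conj order.strict_trans1 order.strict_trans2)
  with level_point[of \<phi> \<theta>] show ?thesis by metis
qed

lemma exists_lambert_arg_preimage_polar:
  assumes "2 \<le> \<rho>"
  shows "\<exists>w. lambert_arg w = \<theta> \<and> w * exp w = of_real \<rho> * cis \<theta>"
proof -
  consider "0 < \<theta>" | "\<theta> < 0" | "\<theta> = 0" by linarith
  then show ?thesis
  proof cases
    case 1
    then show ?thesis using exists_lambert_arg_preimage_upper assms by blast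
  next
    case 2
    then obtain w where w: "0 < Im w" "lambert_arg w = - \<theta>" "w * exp w = of_real \<rho> * cis (- \<theta>)"
      using exists_lambert_arg_preimage_upper[of "- \<theta>"] assms by auto
    then have "w \<notin> \<real>" by (auto simp: complex_is_Real_iff)
    \<comment> \<open>conjugation flips the sign of lambert_arg off the real axis\<close>
    with w have "lambert_arg (cnj w) = \<theta>" by (simp add: lambert_arg_def Arg_cnj)
    moreover have "cnj w * exp (cnj w) = of_real \<rho> * cis \<theta>"
      using arg_cong[OF w(3), of cnj] by (simp add: exp_cnj cis_cnj)
    ultimately show ?thesis by blast
  next
    case 3
    have "\<exists>t\<ge>0. t \<le> \<rho> \<and> t * exp t = \<rho>"
    proof (rule IVT')
      have "\<rho> * 1 \<le> \<rho> * exp \<rho>" using assms by (intro mult_left_mono) auto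
      then show "\<rho> \<le> \<rho> * exp \<rho>" by simp
      show "continuous_on {0..\<rho>} (\<lambda>t. t * exp t)" by (intro continuous_intros)
    qed (use assms in auto)
    then obtain t where "0 \<le> t" "t * exp t = \<rho>" by blast
    then have "of_real t * exp (of_real t) = of_real \<rho> * cis \<theta>"
      using 3 by (simp add: exp_of_real flip: of_real_mult)
    with 3 \<open>0 \<le> t\<close> show ?thesis by (intro exI[of _ "of_real t"]) (simp add: lambert_arg_def)
  qed
qed

lemma exists_lambert_arg_preimage:
  assumes "2 \<le> norm z"
  shows "\<exists>w. lambert_arg w = Arg z + 2 * of_int k * pi \<and> w * exp w = z"
proof -
  have "cis (Arg z + 2 * of_int k * pi) = cis (Arg z)"
    using cis_multiple_2pi[of "of_int k"] by (simp add: cis_mult [symmetric] mult_ac)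
  then have "of_real (norm z) * cis (Arg z + 2 * of_int k * pi) = z"
    using rcis_cmod_Arg[of z] by (simp add: rcis_def)
  then show ?thesis using exists_lambert_arg_preimage_polar[OF assms] by metis
qed

lemma exists_lambert_preimage_in_lambert_log_domain:
  assumes "lambert_bound k \<le> norm z"
  obtains w where "w \<in> lambert_log_domain" "lambert_arg w = Arg z + 2 * of_int k * pi"
    and "w * exp w = z"
proof -
  have "2 \<le> norm z" using assms lambert_bound_ge_two[of k] by linarith
  then obtain w where w: "lambert_arg w = Arg z + 2 * of_int k * pi" "w * exp w = z"
    using exists_lambert_arg_preimage by blast
  have "w \<in> lambert_log_domain"
  proof (rule ccontr)
    have "\<bar>lambert_arg w\<bar> \<le> (2 * \<bar>real_of_int k\<bar> + 1) * pi"
      unfolding w(1) by (rule abs_le_if_in_branch_strip[OF Arg_plus_in_branch_strip])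
    moreover assume "w \<notin> lambert_log_domain"
    ultimately have "norm z < lambert_bound k - 1/4"
      using norm_mult_exp_less_if_notin_lambert_log_domain w(2) by blast
    with assms show False by linarith
  qed
  with w that show ?thesis by blast
qed

section \<open>The derivative of the branch\<close>

(* A logarithm continuous across the negative real axis, equal on it to the limit from above. *)
lemma log_branch_near_negative_real:
  fixes z :: complex and k :: int
  assumes "Re z < 0" "Im z = 0"
  obtains c where "(c has_field_derivative inverse z) (at z)"
    and "Im (c z) = Arg z + 2 * of_int k * pi"
    and "\<forall>\<^sub>F u in nhds z. exp (c u) = u \<and> (Im u = 0 \<longrightarrow> Im (c u) \<in> branch_strip k)"
proof
  define c where "c u = Ln (- u) + \<i> * pi + \<i> * (of_int k * (of_real pi * 2))" for u
  have "- z \<notin> \<real>\<^sub>\<le>\<^sub>0" using assms(1) by (simp add: complex_nonpos_Reals_iff)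
  then show "(c has_field_derivative inverse z) (at z)"
    unfolding c_def[abs_def] by (auto intro!: derivative_eq_intros simp: inverse_minus_eq)
  have "- z \<noteq> 0" using assms(1) by auto
  then show "Im (c z) = Arg z + 2 * of_int k * pi"
    using assms Arg_eq_pi[of z] Arg_eq_0[of "- z"]
    by (simp add: c_def Ln_Arg complex_is_Real_iff algebra_simps)
  have "\<forall>\<^sub>F u in nhds z. Re u < 0"
    using eventually_nhds_in_open[OF open_halfspace_Re_lt, of z 0] assms(1) by simp
  then show "\<forall>\<^sub>F u in nhds z. exp (c u) = u \<and> (Im u = 0 \<longrightarrow> Im (c u) \<in> branch_strip k)"
  proof eventually_elim
    case (elim u)
    then have "- u \<noteq> 0" by auto
    then have "exp (c u) = u" by (simp add: c_def exp_add)
    moreover have "Im (c u) = (2 * of_int k + 1) * pi" if "Im u = 0"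
      using \<open>Re u < 0\<close> that Arg_eq_0[of "- u"] \<open>- u \<noteq> 0\<close>
      by (simp add: c_def Ln_Arg complex_is_Real_iff algebra_simps)
    ultimately show ?case by (simp add: branch_strip_def)
  qed
qed

lemma log_branch_near:
  fixes z :: complex and k :: int
  assumes "z \<noteq> 0"
  obtains c where "(c has_field_derivative inverse z) (at z)"
    and "Im (c z) = Arg z + 2 * of_int k * pi"
    and "\<forall>\<^sub>F u in nhds z. exp (c u) = u \<and>
          ((z \<in> \<real>\<^sub>\<le>\<^sub>0 \<longrightarrow> Im u = 0) \<longrightarrow> Im (c u) \<in> branch_strip k)"
proof (cases "z \<in> \<real>\<^sub>\<le>\<^sub>0")
  case False
  define c where "c u = Ln u + \<i> * (of_int k * (of_real pi * 2))" for u
  have "(c has_field_derivative inverse z) (at z)"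
    unfolding c_def[abs_def] using False by (auto intro!: derivative_eq_intros)
  moreover have "Im (c z) = Arg z + 2 * of_int k * pi"
    using \<open>z \<noteq> 0\<close> by (simp add: c_def Ln_Arg)
  moreover have "\<forall>\<^sub>F u in nhds z. u \<notin> \<real>\<^sub>\<le>\<^sub>0"
    using eventually_nhds_in_open[of "- \<real>\<^sub>\<le>\<^sub>0" z] False by (simp add: open_Compl)
  then have "\<forall>\<^sub>F u in nhds z. exp (c u) = u \<and> Im (c u) \<in> branch_strip k"
  proof eventually_elim
    case (elim u)
    then have "u \<noteq> 0" by auto
    then have "Im (c u) = Arg u + 2 * of_int k * pi" by (simp add: c_def Ln_Arg)
    then have "Im (c u) \<in> branch_strip k" by (simp only: Arg_plus_in_branch_strip)
    with \<open>u \<noteq> 0\<close> show ?case by (simp add: c_def)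
  qed
  then have "\<forall>\<^sub>F u in nhds z. exp (c u) = u \<and>
      ((z \<in> \<real>\<^sub>\<le>\<^sub>0 \<longrightarrow> Im u = 0) \<longrightarrow> Im (c u) \<in> branch_strip k)"
    by (rule eventually_mono) auto
  ultimately show ?thesis by (rule that)
next
  case True
  with \<open>z \<noteq> 0\<close> have "Re z < 0" "Im z = 0"
    by (auto simp: complex_nonpos_Reals_iff complex_eq_iff)
  then obtain c where "(c has_field_derivative inverse z) (at z)"
    "Im (c z) = Arg z + 2 * of_int k * pi"
    "\<forall>\<^sub>F u in nhds z. exp (c u) = u \<and> (Im u = 0 \<longrightarrow> Im (c u) \<in> branch_strip k)"
    by (rule log_branch_near_negative_real)
  with True show ?thesis by (intro that[of c]) auto
qed

lemma nonpos_Reals_in_lambert_cut: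
  assumes "z \<in> \<real>\<^sub>\<le>\<^sub>0" "1 \<le> norm z"
  shows "z \<in> lambert_cut k"
proof -
  have "Im z = 0" "Re z \<le> - 1"
    using assms by (auto simp: complex_nonpos_Reals_iff cmod_eq_Re)
  moreover have "exp (-1) \<le> (1::real)" by simp
  ultimately have "Im z = 0" "Re z \<le> - exp (-1)" "Re z \<le> 0" by linarith+
  then show ?thesis by (simp add: lambert_cut_def)
qed

lemma Lambert_W_eventually_eq_inverse:
  assumes g: "\<And>w. w \<in> lambert_log_domain \<Longrightarrow> g (lambert_log w) = w"
    and c: "isCont c z" "c z \<in> lambert_log ` lambert_log_domain"
    and c_log: "\<forall>\<^sub>F u in nhds z. u \<in> S \<longrightarrow> exp (c u) = u \<and> Im (c u) \<in> branch_strip k"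
    and large: "lambert_bound k \<le> norm z"
  shows "\<forall>\<^sub>F u in nhds z. u \<in> S \<longrightarrow> Lambert_W k u = g (c u)"
proof -
  have "\<forall>\<^sub>F u in nhds z. c u \<in> lambert_log ` lambert_log_domain"
    using c open_lambert_log_image
    by (auto simp: isCont_def tendsto_at_iff_tendsto_nhds intro: topological_tendstoD)
  moreover have "\<forall>\<^sub>F u in nhds z. lambert_bound k - 1/4 \<le> norm u"
  proof -
    have "\<forall>\<^sub>F u in nhds z. u \<in> ball z (1/4)" by (intro eventually_nhds_in_open) auto
    then show ?thesis
    proof eventually_elim
      case (elim u)
      then have "norm z \<le> norm u + 1/4" using norm_triangle_sub[of z u] by (simp add: dist_norm)
      with large show ?case by linarith
    qed
  qed
  ultimately show ?thesis using c_log
  proof eventually_elim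
    case (elim u)
    show ?case
    proof
      assume "u \<in> S"
      obtain v where v: "v \<in> lambert_log_domain" "c u = lambert_log v" using elim(1) by blast
      have "v \<noteq> 0" using v(1) by (rule lambert_log_domain_nonzero)
      have "v * exp v = u" using elim(3) \<open>u \<in> S\<close> v(2) exp_lambert_log[OF \<open>v \<noteq> 0\<close>] by simp
      moreover have "lambert_arg v \<in> branch_strip k"
        using elim(3) \<open>u \<in> S\<close> v(2) Im_lambert_log[OF \<open>v \<noteq> 0\<close>] by simp
      ultimately have "Lambert_W k u = v"
        using Lambert_W_eqI[OF v(1)] elim(2) by blast
      then show "Lambert_W k u = g (c u)" using g v by simp
    qed
  qed
qed

lemma Lambert_W_has_field_derivative:
  assumes large: "lambert_bound k \<le> norm z"
    and w: "w \<in> lambert_log_domain" "lambert_arg w = Arg z + 2 * of_int k * pi" "w * exp w = z"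
    and S: "z \<in> S" "z \<in> \<real>\<^sub>\<le>\<^sub>0 \<Longrightarrow> S \<subseteq> {u. Im u = 0}"
  shows "(Lambert_W k has_field_derivative w / (1 + w) * inverse z) (at z within S)"
proof -
  obtain g where g: "\<And>w. w \<in> lambert_log_domain \<Longrightarrow> g (lambert_log w) = w"
    and g_deriv: "\<And>w. w \<in> lambert_log_domain \<Longrightarrow>
      (g has_field_derivative w / (1 + w)) (at (lambert_log w))"
    using lambert_log_inverse by blast
  have "z \<noteq> 0" using w(1,3) by (auto simp: lambert_log_domain_nonzero)
  then obtain c where c_deriv: "(c has_field_derivative inverse z) (at z)"
    and c_z: "Im (c z) = Arg z + 2 * of_int k * pi"
    and c_log: "\<forall>\<^sub>F u in nhds z. exp (c u) = u \<and>
          ((z \<in> \<real>\<^sub>\<le>\<^sub>0 \<longrightarrow> Im u = 0) \<longrightarrow> Im (c u) \<in> branch_strip k)"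
    by (rule log_branch_near)
  have "exp (c z) = exp (lambert_log w)"
    using eventually_nhds_x_imp_x[OF c_log] w by (simp add: exp_lambert_log lambert_log_domain_nonzero)
  then have c_z_eq: "c z = lambert_log w"
    by (rule exp_inj_on_branch_strip[of _ _ k])
      (use c_z w Arg_plus_in_branch_strip in \<open>simp_all add: Im_lambert_log lambert_log_domain_nonzero\<close>)
  from c_log have "\<forall>\<^sub>F u in nhds z. u \<in> S \<longrightarrow> exp (c u) = u \<and> Im (c u) \<in> branch_strip k"
    by (rule eventually_mono) (use S(2) in auto)
  then have "\<forall>\<^sub>F u in nhds z. u \<in> S \<longrightarrow> Lambert_W k u = g (c u)"
    using Lambert_W_eventually_eq_inverse[OF g DERIV_isCont[OF c_deriv]] c_z_eq w(1) large by blast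
  moreover have "((\<lambda>u. g (c u)) has_field_derivative w / (1 + w) * inverse z) (at z within S)"
    using DERIV_chain2[OF g_deriv[OF w(1), folded c_z_eq] c_deriv]
    by (simp add: has_field_derivative_at_within)
  ultimately show ?thesis using has_field_derivative_cong_ev[OF refl _ refl refl S(1)] by simp
qed

theorem theorem5:
  fixes k :: int and z :: complex
  assumes "norm z \<ge> (1/2 + (2 * \<bar>real_of_int k\<bar> + 1) * pi) * exp (- 1/2)"
  shows "\<exists>D. Lambert_W_has_deriv k z D \<and> norm D \<le> 1 / norm z"
proof -
  have large: "lambert_bound k \<le> norm z" using assms by (simp add: lambert_bound_def)
  then obtain w where w: "w \<in> lambert_log_domain" "lambert_arg w = Arg z + 2 * of_int k * pi"
    "w * exp w = z"
    by (rule exists_lambert_preimage_in_lambert_log_domain)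
  define S where "S = (if z \<in> lambert_cut k then lambert_cut k else UNIV)"
  have "z \<in> \<real>\<^sub>\<le>\<^sub>0 \<Longrightarrow> S \<subseteq> {u. Im u = 0}"
    using nonpos_Reals_in_lambert_cut[of z k] large lambert_bound_ge_two[of k]
    by (auto simp: S_def lambert_cut_def split: if_splits)
  then have "Lambert_W_has_deriv k z (w / (1 + w) * inverse z)"
    using Lambert_W_has_field_derivative[OF large w] by (simp add: Lambert_W_has_deriv_def S_def)
  moreover have "norm (w / (1 + w)) \<le> 1"
    using w(1) by (intro norm_divide_one_plus_le) (auto simp: lambert_log_domain_def)
  then have "norm (w / (1 + w) * inverse z) \<le> 1 / norm z"
    using mult_right_mono[of _ 1 "inverse (norm z)"] by (simp add: norm_mult norm_inverse divide_inverse)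
  ultimately show ?thesis by blast
qed

end
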